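(* Assume $W_c$ satisfies Assumption 1. Then for all integers $k,n\ge2$, \[ \log P_j(k,n)\le\inf_{s\in(0,1)}\Big[-nsR+(n-1)\,U\big[W_s,W_c,\downarrow;\tfrac{k-1}{n-1}\big](s)+\overline\delta_{W_s}(s)+\overline\delta_{W_c}(s)\Big]. \]
   Context: Setup. $\mathcal M$ is a finite set and $W_s=\{W_s(m|m')\}$ an irreducible aperiodic transition matrix on $\mathcal M$; the message $M^k=(M_1,\dots,M_k)$ has law $P_{M^k}(m^k)=P_{M_1}(m_1)\prod_{i=2}^kW_s(m_i|m_{i-1})$ for some initial distribution $P_{M_1}$. $\mathcal X$ is a finite abelian group, $\mathcal Z$ a finite set, $W_c=\{W_c(x,z|x',z')\}$ an irreducible aperiodic transition matrix on $\mathcal X\times\mathcal Z$, and $(X^n,Z^n)$ has law $P_{X^nZ^n}(x^n,z^n)=P_{X_1Z_1}(x_1,z_1)\prod_{i=2}^nW_c(x_i,z_i|x_{i-1},z_{i-1})$ for an initial distribution $P_{X_1Z_1}$ with marginal $P_{Z_1}$. The channel maps input $\tilde x^n\in\mathcal X^n$ to output $(x^n,z^n)$ with probability $P_{X^nZ^n}(x^n-\tilde x^n,z^n)$. A code is $(\mathsf e,\mathsf d)$ with $\mathsf e:\mathcal M^k\to\mathcal X^n$, $\mathsf d:(\mathcal X\times\mathcal Z)^n\to\mathcal M^k$; $P_j(k,n)$ is the infimum over codes of $\sum_{m^k}P_{M^k}(m^k)\Pr[\mathsf d(\text{output})\ne m^k\mid\text{input }\mathsf e(m^k)]$. $R:=\log|\mathcal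 X|$. Assumption 1: $\sum_xW_c(x,z|x',z')$ does not depend on $x'$; call it $W_{c,Z}(z|z')$. Perron–Frobenius notation: entrywise powers $a^t$ of transition probabilities are taken to be $0$ when $a=0$. For a nonnegative irreducible matrix $A$ indexed by a finite set, $\lambda(A)$ is its Perron–Frobenius eigenvalue and $v_A$ the positive vector with $\sum_iv_A(i)A(i,j)=\lambda(A)v_A(j)$ for all $j$, normalized so $\min_iv_A(i)=1$. Quantities. $A^s_\theta(m,m'):=W_s(m|m')^{1-\theta}$; $A^c_\theta((x,z),(x',z')):=W_c(x,z|x',z')^{1-\theta}W_{c,Z}(z|z')^{\theta}$. $\theta H^{W_s}_{1-\theta}(M):=\log\lambda(A^s_\theta)$, $\theta H^{W_c,\downarrow}_{1-\theta}(X|Z):=\log\lambda(A^c_\theta)$. For $r>0$: $U[W_s,W_c,\downarrow;r](\theta):=r\theta H^{W_s}_{1-\theta}(M)+\theta H^{W_c,\downarrow}_{1-\theta}(X|Z)$. With $w^s_\theta(m):=P_{M_1}(m)^{1-\theta}$ and $w^c_\theta(x,z):=P_{X_1Z_1}(x,z)^{1-\theta}P_{Z_1}(z)^{\theta}$: $\overline\delta_{W_s}(\theta):=\log(v_{A^s_\theta}\cdot w^s_\theta)$, $\overline\delta_{W_c}(\theta):=\log(v_{A^c_\theta}\cdot w^c_\theta)$. *)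

theory Defs
  imports "HOL-Analysis.Analysis"
begin

(* Matrices on a finite index set are functions A :: 'a => 'a => real, A i j = A(i,j).
   A transition matrix W is stored as W m m' = W(m|m') (probability of moving from m' to m). *)

fun mpow :: "('a::finite \<Rightarrow> 'a \<Rightarrow> real) \<Rightarrow> nat \<Rightarrow> 'a \<Rightarrow> 'a \<Rightarrow> real" where
  "mpow A 0 = (\<lambda>i j. if i = j then 1 else 0)"
| "mpow A (Suc t) = (\<lambda>i j. \<Sum>l\<in>UNIV. mpow A t i l * A l j)"

definition transition_matrix :: "('a::finite \<Rightarrow> 'a \<Rightarrow> real) \<Rightarrow> bool" where
  "transition_matrix W \<longleftrightarrow> (\<forall>m m'. 0 \<le> W m m') \<and> (\<forall>m'. (\<Sum>m\<in>UNIV. W m m') = 1)"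

definition irreducible_mat :: "('a::finite \<Rightarrow> 'a \<Rightarrow> real) \<Rightarrow> bool" where
  "irreducible_mat A \<longleftrightarrow> (\<forall>i j. \<exists>t>0. mpow A t i j > 0)"

definition aperiodic_mat :: "('a::finite \<Rightarrow> 'a \<Rightarrow> real) \<Rightarrow> bool" where
  "aperiodic_mat A \<longleftrightarrow> (\<forall>i. Gcd {t. 0 < t \<and> mpow A t i i > 0} = (1::nat))"

definition prob_dist :: "('a::finite \<Rightarrow> real) \<Rightarrow> bool" where
  "prob_dist P \<longleftrightarrow> (\<forall>a. 0 \<le> P a) \<and> (\<Sum>a\<in>UNIV. P a) = 1"

definition pf_eigval :: "('a::finite \<Rightarrow> 'a \<Rightarrow> real) \<Rightarrow> real" where
  "pf_eigval A = (THE r. \<exists>v. (\<forall>i. 0 < v i) \<and> (\<forall>j. (\<Sum>i\<in>UNIV. v i * A i j) = r * v j))"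

definition pf_vec :: "('a::finite \<Rightarrow> 'a \<Rightarrow> real) \<Rightarrow> 'a \<Rightarrow> real" where
  "pf_vec A = (THE v. (\<forall>i. 0 < v i) \<and> (\<forall>j. (\<Sum>i\<in>UNIV. v i * A i j) = pf_eigval A * v j)
                      \<and> Min (range v) = 1)"

fun chain_prob :: "('a \<Rightarrow> 'a \<Rightarrow> real) \<Rightarrow> 'a \<Rightarrow> 'a list \<Rightarrow> real" where
  "chain_prob W prev [] = 1"
| "chain_prob W prev (a # as) = W a prev * chain_prob W a as"

fun markov_prob :: "('a \<Rightarrow> real) \<Rightarrow> ('a \<Rightarrow> 'a \<Rightarrow> real) \<Rightarrow> 'a list \<Rightarrow> real" where
  "markov_prob P1 W [] = 1"
| "markov_prob P1 W (a # as) = P1 a * chain_prob W a as"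

definition code_error ::
  "('m::finite \<Rightarrow> real) \<Rightarrow> ('m \<Rightarrow> 'm \<Rightarrow> real) \<Rightarrow>
   (('x::{ab_group_add,finite} \<times> 'z::finite) \<Rightarrow> real) \<Rightarrow> ('x \<times> 'z \<Rightarrow> 'x \<times> 'z \<Rightarrow> real) \<Rightarrow>
   nat \<Rightarrow> nat \<Rightarrow> ('m list \<Rightarrow> 'x list) \<Rightarrow> (('x \<times> 'z) list \<Rightarrow> 'm list) \<Rightarrow> real" where
  "code_error PM1 Ws PXZ1 Wc k n e d =
     (\<Sum>ms\<in>{ms. length ms = k}. markov_prob PM1 Ws ms *
        (\<Sum>ys\<in>{ys. length ys = n}.
           (if d ys \<noteq> ms then
              markov_prob PXZ1 Wc (map2 (\<lambda>(x, z) xt. (x - xt, z)) ys (e ms)) else 0)))"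

definition Pj ::
  "('m::finite \<Rightarrow> real) \<Rightarrow> ('m \<Rightarrow> 'm \<Rightarrow> real) \<Rightarrow>
   (('x::{ab_group_add,finite} \<times> 'z::finite) \<Rightarrow> real) \<Rightarrow> ('x \<times> 'z \<Rightarrow> 'x \<times> 'z \<Rightarrow> real) \<Rightarrow>
   nat \<Rightarrow> nat \<Rightarrow> real" where
  "Pj PM1 Ws PXZ1 Wc k n =
     Inf {code_error PM1 Ws PXZ1 Wc k n e d | e d.
            \<forall>ms. length ms = k \<longrightarrow> length (e ms) = n}"

definition assumption1 :: "('x::{ab_group_add,finite} \<times> 'z::finite \<Rightarrow> 'x \<times> 'z \<Rightarrow> real) \<Rightarrow> bool" where
  "assumption1 Wc \<longleftrightarrow> (\<forall>z z' x1 x2. (\<Sum>x\<in>UNIV. Wc (x, z) (x1, z')) = (\<Sum>x\<in>UNIV. Wc (x, z) (x2, z')))"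

(* W_{c,Z}(z|z'), well defined under Assumption 1 (x' = 0 as representative) *)
definition WcZ :: "('x::{ab_group_add,finite} \<times> 'z::finite \<Rightarrow> 'x \<times> 'z \<Rightarrow> real) \<Rightarrow> 'z \<Rightarrow> 'z \<Rightarrow> real" where
  "WcZ Wc z z' = (\<Sum>x\<in>UNIV. Wc (x, z) (0, z'))"

definition As :: "('m::finite \<Rightarrow> 'm \<Rightarrow> real) \<Rightarrow> real \<Rightarrow> 'm \<Rightarrow> 'm \<Rightarrow> real" where
  "As Ws \<theta> m m' = Ws m m' powr (1 - \<theta>)"

definition Ac :: "('x::{ab_group_add,finite} \<times> 'z::finite \<Rightarrow> 'x \<times> 'z \<Rightarrow> real) \<Rightarrow> real \<Rightarrow>
                  'x \<times> 'z \<Rightarrow> 'x \<times> 'z \<Rightarrow> real" where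
  "Ac Wc \<theta> a b = Wc a b powr (1 - \<theta>) * WcZ Wc (snd a) (snd b) powr \<theta>"

(* theta * H^{W_s}_{1-theta}(M) *)
definition thetaH_s :: "('m::finite \<Rightarrow> 'm \<Rightarrow> real) \<Rightarrow> real \<Rightarrow> real" where
  "thetaH_s Ws \<theta> = ln (pf_eigval (As Ws \<theta>))"

(* theta * H^{W_c,down}_{1-theta}(X|Z) *)
definition thetaH_c :: "('x::{ab_group_add,finite} \<times> 'z::finite \<Rightarrow> 'x \<times> 'z \<Rightarrow> real) \<Rightarrow> real \<Rightarrow> real" where
  "thetaH_c Wc \<theta> = ln (pf_eigval (Ac Wc \<theta>))"

definition U_fn :: "('m::finite \<Rightarrow> 'm \<Rightarrow> real) \<Rightarrow> ('x::{ab_group_add,finite} \<times> 'z::finite \<Rightarrow> 'x \<times> 'z \<Rightarrow> real)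
                    \<Rightarrow> real \<Rightarrow> real \<Rightarrow> real" where
  "U_fn Ws Wc r \<theta> = r * thetaH_s Ws \<theta> + thetaH_c Wc \<theta>"

definition delta_s :: "('m::finite \<Rightarrow> real) \<Rightarrow> ('m \<Rightarrow> 'm \<Rightarrow> real) \<Rightarrow> real \<Rightarrow> real" where
  "delta_s PM1 Ws \<theta> = ln (\<Sum>m\<in>UNIV. pf_vec (As Ws \<theta>) m * PM1 m powr (1 - \<theta>))"

definition PZ1 :: "('x::finite \<times> 'z \<Rightarrow> real) \<Rightarrow> 'z \<Rightarrow> real" where
  "PZ1 PXZ1 z = (\<Sum>x\<in>UNIV. PXZ1 (x, z))"

definition delta_c :: "(('x::{ab_group_add,finite} \<times> 'z::finite) \<Rightarrow> real) \<Rightarrow>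
                       ('x \<times> 'z \<Rightarrow> 'x \<times> 'z \<Rightarrow> real) \<Rightarrow> real \<Rightarrow> real" where
  "delta_c PXZ1 Wc \<theta> = ln (\<Sum>a\<in>UNIV. pf_vec (Ac Wc \<theta>) a *
                              (PXZ1 a powr (1 - \<theta>) * PZ1 PXZ1 (snd a) powr \<theta>))"

definition elog :: "real \<Rightarrow> ereal" where
  "elog x = (if x = 0 then -\<infinity> else ereal (ln x))"

end

theory Submission
  imports Defs
begin

text \<open>Random coding with maximum-likelihood decoding. Averaging the error over all codebooks with
  independent uniform codewords and applying Gallager's bound with exponent \<open>s\<close> gives
  \<open>P\<^sub>j \<le> |X|\<^bsup>-ns\<^esub> (\<Sum>\<^sub>m P(m)\<^bsup>1-s\<^esub>) (\<Sum>\<^sub>y P(y)\<^bsup>1-s\<^esub> (\<Sum>\<^sub>x P(y - x))\<^bsup>s\<^esub>)\<close>.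
  By Assumption 1 the inner sum \<open>\<Sum>\<^sub>x P(y - x)\<close> is the probability of the \<open>Z\<close>-part of \<open>y\<close>
  under the Markov chain \<open>W\<^sub>c\<^sub>,\<^sub>Z\<close>, so both outer sums are path sums of the nonnegative irreducible
  matrices \<open>A\<^sup>s\<^sub>s\<close> and \<open>A\<^sup>c\<^sub>s\<close>. A positive left Perron--Frobenius eigenvector \<open>v \<ge> 1\<close>
  bounds a path sum of length \<open>t + 1\<close> with initial weights \<open>w\<close> by \<open>\<lambda>\<^sup>t (v \<cdot> w)\<close>; taking
  logarithms gives the bound for every \<open>s\<close>. The eigenvector itself comes from Brouwer's fixed
  point theorem.\<close>

section \<open>Perron--Frobenius theory of irreducible nonnegative matrices\<close>

abbreviation left_eigvec :: "('a::finite \<Rightarrow> 'a \<Rightarrow> real) \<Rightarrow> real \<Rightarrow> ('a \<Rightarrow> real) \<Rightarrow> bool" where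
  "left_eigvec A r v \<equiv> \<forall>j. (\<Sum>i\<in>UNIV. v i * A i j) = r * v j"

lemma mpow_nonneg: "\<forall>i j. 0 \<le> A i j \<Longrightarrow> 0 \<le> mpow A t i j"
  by (induction t arbitrary: i j) (auto intro!: sum_nonneg)

lemma mpow_Suc_posE:
  assumes "\<forall>i j. 0 \<le> A i j" and "0 < mpow A (Suc t) i j"
  obtains l where "0 < mpow A t i l" "0 < A l j"
proof -
  have "0 < (\<Sum>l\<in>UNIV. mpow A t i l * A l j)" using assms(2) by simp
  then obtain l where l: "0 < mpow A t i l * A l j" by (meson not_le sum_nonpos)
  moreover have "0 \<le> mpow A t i l" by (rule mpow_nonneg[OF assms(1)])
  ultimately show ?thesis using that assms(1) by (auto simp: zero_less_mult_iff)
qed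

lemma irreducible_mat_cong_support:
  fixes A B :: "'a::finite \<Rightarrow> 'a \<Rightarrow> real"
  assumes "irreducible_mat A" "\<forall>i j. 0 \<le> A i j" "\<forall>i j. 0 \<le> B i j"
    and "\<forall>i j. 0 < A i j \<longleftrightarrow> 0 < B i j"
  shows "irreducible_mat B"
proof -
  have "0 < mpow A t i j \<Longrightarrow> 0 < mpow B t i j" for t i j
  proof (induction t arbitrary: j)
    case (Suc t)
    then obtain l where "0 < mpow A t i l" "0 < A l j"
      using mpow_Suc_posE assms(2) by blast
    then have "0 < mpow B t i l * B l j" using Suc.IH assms(4) by simp
    moreover have "\<forall>l'. 0 \<le> mpow B t i l' * B l' j"
      using mpow_nonneg[OF assms(3)] assms(3) by simp
    ultimately show ?case
      using member_le_sum[of l UNIV "\<lambda>l'. mpow B t i l' * B l' j"] by force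
  qed simp
  then show ?thesis using assms(1) unfolding irreducible_mat_def by blast
qed

text \<open>A zero entry propagates backwards along every positive path.\<close>

lemma nonneg_left_eigvec_eq_0:
  fixes A :: "'a::finite \<Rightarrow> 'a \<Rightarrow> real"
  assumes nn: "\<forall>i j. 0 \<le> A i j" and irr: "irreducible_mat A"
    and u: "\<forall>i. 0 \<le> u i" "left_eigvec A r u" and zero: "u j0 = 0"
  shows "u i = 0"
proof -
  have "u j = 0 \<Longrightarrow> 0 < mpow A t i j \<Longrightarrow> u i = 0" for t j
  proof (induction t arbitrary: j)
    case (Suc t)
    then obtain l where l: "0 < mpow A t i l" "0 < A l j"
      using mpow_Suc_posE nn by blast
    have "(\<Sum>i\<in>UNIV. u i * A i j) = 0" using u Suc.prems by simp
    then have "u l * A l j = 0"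
      using sum_nonneg_eq_0_iff[of UNIV "\<lambda>i. u i * A i j"] u nn by simp
    then show ?case using Suc.IH l by simp
  qed (simp split: if_splits)
  then show ?thesis using irr zero unfolding irreducible_mat_def by blast
qed

definition prob_simplex :: "(real ^ 'a::finite) set" where
  "prob_simplex = {x. (\<forall>i. 0 \<le> x $ i) \<and> (\<Sum>i\<in>UNIV. x $ i) = 1}"

lemma compact_prob_simplex: "compact prob_simplex"
proof -
  have "closed (prob_simplex :: (real ^ 'a) set)" unfolding prob_simplex_def
    by (intro closed_Collect_conj closed_Collect_all closed_Collect_le closed_Collect_eq
        continuous_intros)
  moreover have "norm x \<le> 1" if "x \<in> prob_simplex" for x :: "real ^ 'a"
    using norm_le_l1_cart[of x] that by (simp add: prob_simplex_def)
  then have "bounded (prob_simplex :: (real ^ 'a) set)" unfolding bounded_iff by blast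
  ultimately show ?thesis by (simp add: compact_eq_bounded_closed)
qed

lemma convex_prob_simplex: "convex prob_simplex"
  unfolding convex_def prob_simplex_def
  by (auto simp: sum.distrib simp flip: sum_distrib_left)

lemma prob_simplex_nonempty: "prob_simplex \<noteq> {}"
proof -
  have "(\<chi> i. 1 / real CARD('a::finite)) \<in> (prob_simplex :: (real ^ 'a) set)"
    by (simp add: prob_simplex_def)
  then show ?thesis by blast
qed

text \<open>Brouwer's theorem applied to \<open>x \<mapsto> x(A + I) / \<parallel>x(A + I)\<parallel>\<^sub>1\<close> on the simplex.\<close>

lemma positive_left_eigvec_exists:
  fixes A :: "'a::finite \<Rightarrow> 'a \<Rightarrow> real"
  assumes nn: "\<forall>i j. 0 \<le> A i j" and irr: "irreducible_mat A"
  obtains v r where "\<forall>i. 0 < v i" "left_eigvec A r v"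
proof -
  define y where "y x j = (\<Sum>i\<in>UNIV. x $ i * A i j) + x $ j" for x :: "real ^ 'a" and j
  define T where "T x = (\<Sum>j\<in>UNIV. y x j)" for x
  define f where "f x = (\<chi> j. y x j / T x)" for x
  have y_nonneg: "0 \<le> y x j" if "x \<in> prob_simplex" for x j
    using that nn by (auto simp: y_def prob_simplex_def intro!: add_nonneg_nonneg sum_nonneg)
  have T_ge_1: "1 \<le> T x" if "x \<in> prob_simplex" for x
  proof -
    have "T x = (\<Sum>j\<in>UNIV. \<Sum>i\<in>UNIV. x $ i * A i j) + 1"
      using that by (simp add: T_def y_def sum.distrib prob_simplex_def)
    moreover have "0 \<le> (\<Sum>j\<in>UNIV. \<Sum>i\<in>UNIV. x $ i * A i j)"
      using that nn by (auto simp: prob_simplex_def intro!: sum_nonneg)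
    ultimately show ?thesis by simp
  qed
  have "continuous_on prob_simplex f"
    using T_ge_1 unfolding f_def T_def y_def by (intro continuous_intros) fastforce
  moreover have "f x \<in> prob_simplex" if "x \<in> prob_simplex" for x
    using T_ge_1[OF that] y_nonneg[OF that]
    by (auto simp: f_def prob_simplex_def T_def simp flip: sum_divide_distrib)
  ultimately obtain x where x: "x \<in> prob_simplex" "f x = x"
    using brouwer[OF compact_prob_simplex convex_prob_simplex prob_simplex_nonempty] by blast
  have eig: "left_eigvec A (T x - 1) (\<lambda>i. x $ i)"
  proof
    fix j
    have "y x j = T x * x $ j"
      using T_ge_1[OF x(1)] arg_cong[OF x(2), of "\<lambda>x. x $ j"] by (simp add: f_def field_simps)
    then show "(\<Sum>i\<in>UNIV. x $ i * A i j) = (T x - 1) * x $ j"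
      by (simp add: y_def algebra_simps)
  qed
  have x_nonneg: "\<forall>i. 0 \<le> x $ i" using x(1) by (simp add: prob_simplex_def)
  have "0 < x $ i" for i
  proof (rule ccontr)
    assume "\<not> 0 < x $ i"
    then have "x $ i = 0" using x_nonneg by (simp add: less_le)
    then have "x $ l = 0" for l
      using nonneg_left_eigvec_eq_0[OF nn irr, of "\<lambda>i. x $ i"] x_nonneg eig by blast
    then show False using x(1) by (simp add: prob_simplex_def)
  qed
  then show ?thesis using that eig by blast
qed

lemma max_ratio_scaling:
  fixes v w :: "'a::finite \<Rightarrow> real"
  assumes "\<forall>i. 0 < v i"
  obtains c j where "\<forall>i. w i \<le> c * v i" "w j = c * v j"
proof -
  define c where "c = Max (range (\<lambda>i. w i / v i))"
  have "c \<in> range (\<lambda>i. w i / v i)" unfolding c_def by (intro Max_in) auto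
  then obtain j where j: "c = w j / v j" by blast
  have "w i / v i \<le> c" for i by (simp add: c_def)
  then have "\<forall>i. w i \<le> c * v i" using assms by (simp add: divide_le_eq)
  moreover have "0 < v j" using assms by blast
  then have "w j = c * v j" using j by simp
  ultimately show ?thesis using that by blast
qed

lemma positive_left_eigval_le:
  fixes A :: "'a::finite \<Rightarrow> 'a \<Rightarrow> real"
  assumes nn: "\<forall>i j. 0 \<le> A i j"
    and v: "\<forall>i. 0 < v i" "left_eigvec A r v"
    and w: "\<forall>i. 0 < w i" "left_eigvec A r' w"
  shows "r' \<le> r"
proof -
  obtain c j where c: "\<forall>i. w i \<le> c * v i" "w j = c * v j"
    using max_ratio_scaling[OF v(1)] by blast
  have "r' * w j = (\<Sum>i\<in>UNIV. w i * A i j)" using w by simp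
  also have "\<dots> \<le> (\<Sum>i\<in>UNIV. c * v i * A i j)"
    using c nn by (intro sum_mono mult_right_mono) auto
  also have "\<dots> = r * w j"
    using v c by (simp add: mult.assoc flip: sum_distrib_left)
  finally show ?thesis using w by simp
qed

lemma positive_left_eigvec_proportional:
  fixes A :: "'a::finite \<Rightarrow> 'a \<Rightarrow> real"
  assumes nn: "\<forall>i j. 0 \<le> A i j" and irr: "irreducible_mat A"
    and v: "\<forall>i. 0 < v i" "left_eigvec A r v"
    and w: "left_eigvec A r w"
  obtains c where "\<forall>i. w i = c * v i"
proof -
  obtain c j where c: "\<forall>i. w i \<le> c * v i" "w j = c * v j"
    using max_ratio_scaling[OF v(1)] by blast
  define u where "u i = c * v i - w i" for i
  have "left_eigvec A r u"
    using v w by (simp add: u_def left_diff_distrib sum_subtractf algebra_simps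
        flip: sum_distrib_left)
  then have "u i = 0" for i
    using nonneg_left_eigvec_eq_0[OF nn irr, of u r j] c by (simp add: u_def)
  then have "\<forall>i. w i = c * v i" by (simp add: u_def)
  then show ?thesis using that by blast
qed

lemma pf_eigval_eqI:
  fixes A :: "'a::finite \<Rightarrow> 'a \<Rightarrow> real"
  assumes nn: "\<forall>i j. 0 \<le> A i j" and v: "\<forall>i. 0 < v i" "left_eigvec A r v"
  shows "pf_eigval A = r"
  unfolding pf_eigval_def
proof (rule the_equality)
  fix r' assume "\<exists>w. (\<forall>i. 0 < w i) \<and> left_eigvec A r' w"
  then obtain w where w: "\<forall>i. 0 < w i" "left_eigvec A r' w" by blast
  show "r' = r"
    using positive_left_eigval_le[OF nn v w] positive_left_eigval_le[OF nn w v] by simp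
qed (use v in blast)

lemma pf_vec:
  fixes A :: "'a::finite \<Rightarrow> 'a \<Rightarrow> real"
  assumes nn: "\<forall>i j. 0 \<le> A i j" and irr: "irreducible_mat A"
  shows "left_eigvec A (pf_eigval A) (pf_vec A)" "\<forall>i. 1 \<le> pf_vec A i"
proof -
  obtain v r where v: "\<forall>i. 0 < v i" "left_eigvec A r v"
    by (rule positive_left_eigvec_exists[OF nn irr])
  define m where "m = Min (range v)"
  have "m \<in> range v" unfolding m_def by (intro Min_in) auto
  then obtain i0 where i0: "v i0 = m" by blast
  have m_pos: "0 < m" using v(1) i0 by blast
  define w where "w i = v i / m" for i
  have w_pos: "\<forall>i. 0 < w i" using v(1) m_pos by (simp add: w_def)
  have w_eig: "left_eigvec A r w" using v(2) by (simp add: w_def flip: sum_divide_distrib)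
  have w_ge_1: "1 \<le> w i" for i using m_pos by (simp add: w_def m_def)
  have w_i0: "w i0 = 1" using i0 m_pos by (simp add: w_def)
  have w_Min: "Min (range w) = 1"
    using w_ge_1 w_i0 by (intro Min_eqI) auto
  have r: "pf_eigval A = r" by (rule pf_eigval_eqI[OF nn w_pos w_eig])
  have "pf_vec A = w"
    unfolding pf_vec_def r
  proof (rule the_equality)
    fix w' assume "(\<forall>i. 0 < w' i) \<and> left_eigvec A r w' \<and> Min (range w') = 1"
    then have w'_eig: "left_eigvec A r w'" and w'_Min: "Min (range w') = 1" by blast+
    obtain c where c: "\<forall>i. w' i = c * w i"
      using positive_left_eigvec_proportional[OF nn irr w_pos w_eig w'_eig] by blast
    have "Min (range w') \<in> range w'" by (intro Min_in) auto
    then have "1 \<in> range w'" using w'_Min by simp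
    then obtain i1 where "w' i1 = 1" by (metis rangeE)
    then have i1: "c * w i1 = 1" using c by simp
    have "1 \<le> w' i0" using w'_Min Min_le[of "range w'" "w' i0"] by simp
    then have c_ge: "1 \<le> c" using c w_i0 by simp
    have "c \<le> c * w i1" using w_ge_1[of i1] c_ge by (simp add: mult_le_cancel_left1)
    then have "c \<le> 1" using i1 by simp
    then show "w' = w" using c c_ge by (simp add: fun_eq_iff)
  qed (use w_pos w_eig w_Min in blast)
  then show "left_eigvec A (pf_eigval A) (pf_vec A)" "\<forall>i. 1 \<le> pf_vec A i"
    using w_eig r w_ge_1 by simp_all
qed

lemma pf_eigval_pos:
  fixes A :: "'a::finite \<Rightarrow> 'a \<Rightarrow> real"
  assumes nn: "\<forall>i j. 0 \<le> A i j" and irr: "irreducible_mat A"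
  shows "0 < pf_eigval A"
proof -
  fix j :: 'a
  obtain t where "0 < mpow A (Suc t) j j"
    using irr unfolding irreducible_mat_def by (metis gr0_implies_Suc)
  then obtain l where l: "0 < A l j" using mpow_Suc_posE nn by blast
  have v: "\<forall>i. 1 \<le> pf_vec A i" using pf_vec[OF nn irr] by blast
  have v_pos: "0 < pf_vec A i" for i using v by (meson less_le_trans zero_less_one)
  have "0 < pf_vec A l * A l j" using l v_pos by simp
  also have "\<dots> \<le> (\<Sum>i\<in>UNIV. pf_vec A i * A i j)"
    using v_pos nn by (intro member_le_sum mult_nonneg_nonneg) (auto intro: less_imp_le)
  also have "\<dots> = pf_eigval A * pf_vec A j" using pf_vec[OF nn irr] by simp
  finally show ?thesis using v_pos[of j] by (simp add: zero_less_mult_iff)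
qed

lemma pf_weighted_sum_pos:
  fixes A :: "'a::finite \<Rightarrow> 'a \<Rightarrow> real"
  assumes "\<forall>i j. 0 \<le> A i j" "irreducible_mat A" "\<forall>a. 0 \<le> w a" "0 < w b"
  shows "0 < (\<Sum>a\<in>UNIV. pf_vec A a * w a)"
proof -
  have v: "\<forall>i. 1 \<le> pf_vec A i" using pf_vec[OF assms(1,2)] by blast
  have v_pos: "0 < pf_vec A i" for i using v by (meson less_le_trans zero_less_one)
  have "0 < pf_vec A b * w b" using v_pos assms(4) by simp
  also have "\<dots> \<le> (\<Sum>a\<in>UNIV. pf_vec A a * w a)"
    using v_pos assms(3) by (intro member_le_sum mult_nonneg_nonneg) (auto intro: less_imp_le)
  finally show ?thesis .
qed

section \<open>Path sums of Markov chains\<close>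

lemma finite_lists_length_UNIV: "finite {xs :: 'a::finite list. length xs = n}"
  using finite_lists_length_eq[of "UNIV :: 'a set" n] by simp

lemma card_lists_length_UNIV: "card {xs :: 'a::finite list. length xs = n} = CARD('a) ^ n"
  using card_lists_length_eq[of "UNIV :: 'a set" n] by simp

lemma sum_lists_length_Suc:
  "(\<Sum>xs\<in>{xs :: 'a::finite list. length xs = Suc n}. f xs)
     = (\<Sum>x\<in>UNIV. \<Sum>xs\<in>{xs. length xs = n}. f (x # xs))"
proof -
  have "{xs :: 'a list. length xs = Suc n} = case_prod (#) ` (UNIV \<times> {xs. length xs = n})"
    by (auto simp: length_Suc_conv image_iff)
  moreover have "inj_on (case_prod (#)) (UNIV \<times> {xs :: 'a list. length xs = n})"
    by (auto simp: inj_on_def)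
  ultimately show ?thesis
    by (simp add: sum.reindex sum.cartesian_product split_def)
qed

lemma chain_prob_nonneg: "\<forall>a b. 0 \<le> W a b \<Longrightarrow> 0 \<le> chain_prob W p as"
  by (induction as arbitrary: p) auto

lemma markov_prob_nonneg: "\<forall>a. 0 \<le> P a \<Longrightarrow> \<forall>a b. 0 \<le> W a b \<Longrightarrow> 0 \<le> markov_prob P W as"
  by (cases as) (auto intro!: mult_nonneg_nonneg chain_prob_nonneg)

lemma chain_prob_powr:
  "\<forall>a b. 0 \<le> W a b \<Longrightarrow> chain_prob W p as powr e = chain_prob (\<lambda>a b. W a b powr e) p as"
  by (induction as arbitrary: p) (auto simp: powr_mult chain_prob_nonneg)

lemma markov_prob_powr:
  "\<forall>a. 0 \<le> P a \<Longrightarrow> \<forall>a b. 0 \<le> W a b \<Longrightarrow>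
    markov_prob P W as powr e = markov_prob (\<lambda>a. P a powr e) (\<lambda>a b. W a b powr e) as"
  by (cases as) (auto simp: powr_mult chain_prob_nonneg chain_prob_powr)

lemma chain_prob_mult_map:
  "chain_prob W p as * chain_prob W' (g p) (map g as)
     = chain_prob (\<lambda>a b. W a b * W' (g a) (g b)) p as"
  by (induction as arbitrary: p) (auto simp: algebra_simps)

lemma markov_prob_mult_map:
  "markov_prob P W as * markov_prob P' W' (map g as)
     = markov_prob (\<lambda>a. P a * P' (g a)) (\<lambda>a b. W a b * W' (g a) (g b)) as"
  by (cases as) (auto simp: algebra_simps simp flip: chain_prob_mult_map)

lemma sum_chain_prob_eq_1:
  assumes "transition_matrix W"
  shows "(\<Sum>as\<in>{as :: 'a::finite list. length as = t}. chain_prob W p as) = 1"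
proof (induction t arbitrary: p)
  case (Suc t)
  then show ?case
    using assms by (simp add: sum_lists_length_Suc transition_matrix_def flip: sum_distrib_left)
qed simp

lemma sum_markov_prob_eq_1:
  assumes "transition_matrix W" "prob_dist P"
  shows "(\<Sum>as\<in>{as :: 'a::finite list. length as = Suc t}. markov_prob P W as) = 1"
  using assms sum_chain_prob_eq_1[OF assms(1)]
  by (simp add: sum_lists_length_Suc prob_dist_def flip: sum_distrib_left)

lemma sum_chain_prob_le_eigvec:
  fixes A :: "'a::finite \<Rightarrow> 'a \<Rightarrow> real"
  assumes nn: "\<forall>a b. 0 \<le> A a b" and v: "\<forall>a. 1 \<le> v a" "left_eigvec A l v"
  shows "(\<Sum>as\<in>{as :: 'a list. length as = t}. chain_prob A p as) \<le> l ^ t * v p"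
proof (induction t arbitrary: p)
  case 0
  then show ?case using v by simp
next
  case (Suc t)
  have "(\<Sum>as\<in>{as :: 'a list. length as = Suc t}. chain_prob A p as)
      = (\<Sum>a\<in>UNIV. A a p * (\<Sum>as\<in>{as :: 'a list. length as = t}. chain_prob A a as))"
    by (simp add: sum_lists_length_Suc sum_distrib_left)
  also have "\<dots> \<le> (\<Sum>a\<in>UNIV. A a p * (l ^ t * v a))"
    using Suc nn by (intro sum_mono mult_left_mono) auto
  also have "\<dots> = l ^ t * (\<Sum>a\<in>UNIV. v a * A a p)"
    by (simp add: sum_distrib_left algebra_simps)
  also have "\<dots> = l ^ Suc t * v p" using v by simp
  finally show ?case .
qed

lemma sum_markov_prob_le_eigvec:
  fixes A :: "'a::finite \<Rightarrow> 'a \<Rightarrow> real"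
  assumes nn: "\<forall>a b. 0 \<le> A a b" and v: "\<forall>a. 1 \<le> v a" "left_eigvec A l v"
    and w: "\<forall>a. 0 \<le> w a"
  shows "(\<Sum>as\<in>{as :: 'a list. length as = Suc t}. markov_prob w A as)
           \<le> l ^ t * (\<Sum>a\<in>UNIV. v a * w a)"
proof -
  have "(\<Sum>as\<in>{as :: 'a list. length as = Suc t}. markov_prob w A as)
      = (\<Sum>a\<in>UNIV. w a * (\<Sum>as\<in>{as :: 'a list. length as = t}. chain_prob A a as))"
    by (simp add: sum_lists_length_Suc sum_distrib_left)
  also have "\<dots> \<le> (\<Sum>a\<in>UNIV. w a * (l ^ t * v a))"
    using sum_chain_prob_le_eigvec[OF nn v] w by (intro sum_mono mult_left_mono) auto
  also have "\<dots> = l ^ t * (\<Sum>a\<in>UNIV. v a * w a)"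
    by (simp add: sum_distrib_left algebra_simps)
  finally show ?thesis .
qed

section \<open>Additive noise on lists\<close>

definition add_list :: "'x::ab_group_add list \<Rightarrow> 'x list \<Rightarrow> 'x list" where
  "add_list as bs = map2 (+) as bs"

definition sub_list :: "'x::ab_group_add list \<Rightarrow> 'x list \<Rightarrow> 'x list" where
  "sub_list as bs = map2 (-) as bs"

definition sub_fst :: "('x::ab_group_add \<times> 'z) list \<Rightarrow> 'x list \<Rightarrow> ('x \<times> 'z) list" where
  "sub_fst ys xs = map2 (\<lambda>(x, z) x'. (x - x', z)) ys xs"

definition add_fst :: "('x::ab_group_add \<times> 'z) list \<Rightarrow> 'x list \<Rightarrow> ('x \<times> 'z) list" where
  "add_fst ys xs = map2 (\<lambda>(x, z) x'. (x + x', z)) ys xs"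

lemma length_add_list [simp]: "length (add_list as bs) = min (length as) (length bs)"
  by (simp add: add_list_def)

lemma length_sub_list [simp]: "length (sub_list as bs) = min (length as) (length bs)"
  by (simp add: sub_list_def)

lemma length_sub_fst [simp]: "length (sub_fst ys xs) = min (length ys) (length xs)"
  by (simp add: sub_fst_def)

lemma length_add_fst [simp]: "length (add_fst ys xs) = min (length ys) (length xs)"
  by (simp add: add_fst_def)

lemma sub_fst_Cons [simp]: "sub_fst ((x, z) # ys) (x' # xs) = (x - x', z) # sub_fst ys xs"
  by (simp add: sub_fst_def)

lemma sub_fst_Nil [simp]: "sub_fst [] xs = []"
  by (simp add: sub_fst_def)

lemma add_list_commute: "add_list as bs = add_list bs as"
  by (simp add: add_list_def zip_commute[of bs] add.commute split_def)

lemma sub_list_add_list: "length as = length bs \<Longrightarrow> sub_list (add_list as bs) bs = as"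
  by (induction as bs rule: list_induct2) (auto simp: add_list_def sub_list_def)

lemma add_list_sub_list: "length as = length bs \<Longrightarrow> add_list (sub_list as bs) bs = as"
  by (induction as bs rule: list_induct2) (auto simp: add_list_def sub_list_def)

lemma sub_fst_add_fst: "length ys = length xs \<Longrightarrow> sub_fst (add_fst ys xs) xs = ys"
  by (induction ys xs rule: list_induct2) (auto simp: add_fst_def sub_fst_def split: prod.splits)

lemma add_fst_sub_fst: "length ys = length xs \<Longrightarrow> add_fst (sub_fst ys xs) xs = ys"
  by (induction ys xs rule: list_induct2) (auto simp: add_fst_def sub_fst_def split: prod.splits)

lemma sub_fst_sub_fst:
  "length ys = length as \<Longrightarrow> length bs = length as
     \<Longrightarrow> sub_fst (sub_fst ys as) bs = sub_fst ys (add_list as bs)"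
proof (induction ys arbitrary: as bs)
  case (Cons y ys)
  then obtain a as' b bs' where "as = a # as'" "bs = b # bs'" by (metis length_Suc_conv)
  with Cons show ?case by (cases y) (auto simp: add_list_def algebra_simps)
qed simp

lemma sum_lists_add_list:
  assumes "length as = n"
  shows "(\<Sum>bs\<in>{bs. length bs = n}. G (add_list as bs)) = (\<Sum>bs\<in>{bs. length bs = n}. G bs)"
  by (rule sum.reindex_bij_witness[where i="\<lambda>bs. sub_list bs as" and j="\<lambda>bs. add_list as bs"])
     (use assms in \<open>auto simp: add_list_sub_list sub_list_add_list add_list_commute[of as]\<close>)

lemma sum_lists_sub_fst:
  assumes "length xs = n"
  shows "(\<Sum>ys\<in>{ys. length ys = n}. G (sub_fst ys xs)) = (\<Sum>ys\<in>{ys. length ys = n}. G ys)"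
  by (rule sum.reindex_bij_witness[where i="\<lambda>ys. add_fst ys xs" and j="\<lambda>ys. sub_fst ys xs"])
     (use assms in \<open>auto simp: sub_fst_add_fst add_fst_sub_fst\<close>)

text \<open>\<open>input_sum Q n y\<close> is \<open>|\<X>|\<^sup>n\<close> times the output probability of \<open>y\<close> under uniformly distributed inputs.\<close>

definition input_sum :: "(('x::{ab_group_add,finite} \<times> 'z) list \<Rightarrow> real) \<Rightarrow> nat \<Rightarrow> ('x \<times> 'z) list \<Rightarrow> real" where
  "input_sum Q n ys = (\<Sum>xs\<in>{xs. length xs = n}. Q (sub_fst ys xs))"

lemma input_sum_sub_fst:
  assumes "length ys = n" "length xs = n"
  shows "input_sum Q n (sub_fst ys xs) = input_sum Q n ys"
proof -
  have "input_sum Q n (sub_fst ys xs) = (\<Sum>bs\<in>{bs. length bs = n}. Q (sub_fst ys (add_list xs bs)))"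
    unfolding input_sum_def by (rule sum.cong) (use assms in \<open>auto simp: sub_fst_sub_fst\<close>)
  also have "\<dots> = input_sum Q n ys"
    unfolding input_sum_def by (rule sum_lists_add_list[OF assms(2)])
  finally show ?thesis .
qed

lemma input_sum_nonneg: "\<forall>ys. 0 \<le> Q ys \<Longrightarrow> 0 \<le> input_sum Q n ys"
  by (simp add: input_sum_def sum_nonneg)

lemma sum_UNIV_diff:
  fixes x :: "'x::{ab_group_add,finite}"
  shows "(\<Sum>u\<in>UNIV. f (x - u)) = (\<Sum>u\<in>UNIV. f u)"
  by (rule sum.reindex_bij_witness[where i="\<lambda>u. x - u" and j="\<lambda>u. x - u"]) auto

lemma sum_fst_eq_WcZ:
  assumes "assumption1 Wc"
  shows "(\<Sum>u\<in>UNIV. Wc (u, z) (x', z')) = WcZ Wc z z'"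
  using assms unfolding assumption1_def WcZ_def by metis

lemma sum_sub_fst_chain_prob:
  fixes Wc :: "'x::{ab_group_add,finite} \<times> 'z::finite \<Rightarrow> 'x \<times> 'z \<Rightarrow> real"
  assumes a1: "assumption1 Wc"
  shows "length ys = t \<Longrightarrow>
    (\<Sum>xs\<in>{xs :: 'x list. length xs = t}. chain_prob Wc (x', z') (sub_fst ys xs))
      = chain_prob (WcZ Wc) z' (map snd ys)"
proof (induction ys arbitrary: t x' z')
  case (Cons y ys)
  obtain x z where y: "y = (x, z)" by fastforce
  from Cons.prems obtain t' where t: "t = Suc t'" "length ys = t'" by auto
  have "(\<Sum>xs\<in>{xs :: 'x list. length xs = t}. chain_prob Wc (x', z') (sub_fst (y # ys) xs))
      = (\<Sum>u\<in>UNIV. Wc (x - u, z) (x', z') *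
           (\<Sum>xs\<in>{xs :: 'x list. length xs = t'}. chain_prob Wc (x - u, z) (sub_fst ys xs)))"
    by (simp add: t y sum_lists_length_Suc sum_distrib_left)
  also have "\<dots> = (\<Sum>u\<in>UNIV. Wc (x - u, z) (x', z') * chain_prob (WcZ Wc) z (map snd ys))"
    using Cons.IH[OF t(2)] by simp
  also have "\<dots> = (\<Sum>u\<in>UNIV. Wc (u, z) (x', z')) * chain_prob (WcZ Wc) z (map snd ys)"
    by (simp add: sum_UNIV_diff[where f="\<lambda>u. Wc (u, z) (x', z')"] flip: sum_distrib_right)
  finally show ?case using sum_fst_eq_WcZ[OF a1] by (simp add: y)
qed simp

lemma input_sum_markov_prob:
  fixes Wc :: "'x::{ab_group_add,finite} \<times> 'z::finite \<Rightarrow> 'x \<times> 'z \<Rightarrow> real"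
  assumes a1: "assumption1 Wc" and len: "length ys = Suc t"
  shows "input_sum (markov_prob P Wc) (Suc t) ys = markov_prob (PZ1 P) (WcZ Wc) (map snd ys)"
proof -
  obtain x z ys' where ys: "ys = (x, z) # ys'" "length ys' = t"
    using len by (metis length_Suc_conv surj_pair)
  have "input_sum (markov_prob P Wc) (Suc t) ys
      = (\<Sum>u\<in>UNIV. P (x - u, z) *
           (\<Sum>xs\<in>{xs :: 'x list. length xs = t}. chain_prob Wc (x - u, z) (sub_fst ys' xs)))"
    by (simp add: input_sum_def ys sum_lists_length_Suc sum_distrib_left)
  also have "\<dots> = (\<Sum>u\<in>UNIV. P (x - u, z) * chain_prob (WcZ Wc) z (map snd ys'))"
    using sum_sub_fst_chain_prob[OF a1 ys(2)] by simp
  also have "\<dots> = markov_prob (PZ1 P) (WcZ Wc) (map snd ys)"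
    by (simp add: ys PZ1_def sum_UNIV_diff[where f="\<lambda>u. P (u, z)"] flip: sum_distrib_right)
  finally show ?thesis .
qed

section \<open>Random coding with maximum-likelihood decoding\<close>

definition codebooks :: "nat \<Rightarrow> nat \<Rightarrow> ('m list \<Rightarrow> 'x list) set" where
  "codebooks k n = Pi\<^sub>E {ms. length ms = k} (\<lambda>_. {xs. length xs = n})"

definition decoding_error ::
  "('m list \<Rightarrow> real) \<Rightarrow> (('x::ab_group_add \<times> 'z) list \<Rightarrow> real) \<Rightarrow> nat \<Rightarrow> nat \<Rightarrow>
   ('m list \<Rightarrow> 'x list) \<Rightarrow> (('x \<times> 'z) list \<Rightarrow> 'm list) \<Rightarrow> real" where
  "decoding_error PM Q k n c dec =
     (\<Sum>ms\<in>{ms. length ms = k}. PM ms *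
        (\<Sum>ys\<in>{ys. length ys = n}. if dec ys \<noteq> ms then Q (sub_fst ys (c ms)) else 0))"

definition ml_decoder ::
  "('m list \<Rightarrow> real) \<Rightarrow> (('x::ab_group_add \<times> 'z) list \<Rightarrow> real) \<Rightarrow> nat \<Rightarrow>
   ('m list \<Rightarrow> 'x list) \<Rightarrow> ('x \<times> 'z) list \<Rightarrow> 'm list" where
  "ml_decoder PM Q k c ys = (SOME ms. length ms = k \<and>
     (\<forall>ms'. length ms' = k \<longrightarrow> PM ms' * Q (sub_fst ys (c ms')) \<le> PM ms * Q (sub_fst ys (c ms))))"

lemma ml_decoder:
  fixes PM :: "'m::finite list \<Rightarrow> real"
  shows "length (ml_decoder PM Q k c ys) = k"
    "length ms' = k \<Longrightarrow> PM ms' * Q (sub_fst ys (c ms'))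
        \<le> PM (ml_decoder PM Q k c ys) * Q (sub_fst ys (c (ml_decoder PM Q k c ys)))"
proof -
  let ?M = "{ms :: 'm list. length ms = k}" and ?q = "\<lambda>ms. PM ms * Q (sub_fst ys (c ms))"
  have fin: "finite ?M" by (rule finite_lists_length_UNIV)
  have "replicate k undefined \<in> ?M" by simp
  then have "?M \<noteq> {}" by blast
  then have "Max (?q ` ?M) \<in> ?q ` ?M" using fin by (intro Max_in) auto
  then obtain ms where ms: "Max (?q ` ?M) = ?q ms" "ms \<in> ?M" by (rule imageE)
  have "\<forall>ms'\<in>?M. ?q ms' \<le> ?q ms" unfolding ms(1)[symmetric] using fin by simp
  then have "\<exists>ms. length ms = k \<and> (\<forall>ms'. length ms' = k \<longrightarrow> ?q ms' \<le> ?q ms)"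
    using ms(2) by blast
  then have "length (ml_decoder PM Q k c ys) = k \<and>
      (\<forall>ms'. length ms' = k \<longrightarrow> ?q ms' \<le> ?q (ml_decoder PM Q k c ys))"
    unfolding ml_decoder_def by (rule someI_ex)
  then show "length (ml_decoder PM Q k c ys) = k"
    "length ms' = k \<Longrightarrow> ?q ms' \<le> ?q (ml_decoder PM Q k c ys)"
    by simp_all
qed

text \<open>Gallager's bound on the indicator that a maximum-likelihood decoder errs on \<open>ms\<close>.\<close>

lemma error_indicator_le_powr:
  fixes q :: "'m \<Rightarrow> real"
  assumes "finite M" "\<forall>m. 0 \<le> q m" "ms \<in> M" "m\<^sub>0 \<in> M" "\<forall>m\<in>M. q m \<le> q m\<^sub>0"
    and "0 \<le> s" "s \<le> 1"
  shows "(if m\<^sub>0 \<noteq> ms then q ms else 0) \<le> q ms powr (1 - s) * (\<Sum>m\<in>M - {ms}. q m) powr s"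
proof (cases "m\<^sub>0 = ms")
  case False
  have "q ms \<le> q m\<^sub>0" using assms by simp
  also have "q m\<^sub>0 \<le> (\<Sum>m\<in>M - {ms}. q m)"
    using assms False by (intro member_le_sum) auto
  finally have le: "q ms \<le> (\<Sum>m\<in>M - {ms}. q m)" .
  have "q ms = q ms powr (1 - s) * q ms powr s"
    using assms(2) by (cases "q ms = 0") (simp_all add: less_le flip: powr_add)
  also have "\<dots> \<le> q ms powr (1 - s) * (\<Sum>m\<in>M - {ms}. q m) powr s"
    using le assms by (intro mult_left_mono powr_mono2) auto
  finally show ?thesis using False by simp
qed simp

lemma decoding_error_ml_decoder_le:
  fixes PM :: "'m::finite list \<Rightarrow> real" and Q :: "('x::ab_group_add \<times> 'z) list \<Rightarrow> real"
    and c :: "'m list \<Rightarrow> 'x list"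
  assumes "\<forall>ms. 0 \<le> PM ms" "\<forall>ys. 0 \<le> Q ys" "0 \<le> s" "s \<le> 1"
  defines "q ys ms \<equiv> PM ms * Q (sub_fst ys (c ms))"
  shows "decoding_error PM Q k n c (ml_decoder PM Q k c)
    \<le> (\<Sum>ms\<in>{ms. length ms = k}. \<Sum>ys\<in>{ys. length ys = n}.
          q ys ms powr (1 - s) * (\<Sum>ms'\<in>{ms. length ms = k} - {ms}. q ys ms') powr s)"
  unfolding decoding_error_def sum_distrib_left
proof (intro sum_mono)
  fix ms ys assume ms: "ms \<in> {ms :: 'm list. length ms = k}"
  have "PM ms * (if ml_decoder PM Q k c ys \<noteq> ms then Q (sub_fst ys (c ms)) else 0)
      = (if ml_decoder PM Q k c ys \<noteq> ms then q ys ms else 0)"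
    by (simp add: q_def)
  also have "\<dots> \<le> q ys ms powr (1 - s) * (\<Sum>ms'\<in>{ms. length ms = k} - {ms}. q ys ms') powr s"
    using ms assms(1-4) ml_decoder[where PM=PM and Q=Q and k=k and c=c and ys=ys]
    by (intro error_indicator_le_powr finite_lists_length_UNIV) (auto simp: q_def)
  finally show "PM ms * (if ml_decoder PM Q k c ys \<noteq> ms then Q (sub_fst ys (c ms)) else 0)
      \<le> q ys ms powr (1 - s) * (\<Sum>ms'\<in>{ms. length ms = k} - {ms}. q ys ms') powr s" .
qed

text \<open>Jensen's inequality for the concave map \<open>t \<mapsto> t powr s\<close> with weights \<open>f\<close>, via Young's inequality.\<close>

lemma sum_mult_powr_le:
  fixes f g :: "'c \<Rightarrow> real"
  assumes fin: "finite C" and f: "\<forall>c. 0 \<le> f c" and g: "\<forall>c. 0 \<le> g c" and a: "0 \<le> a"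
    and fg: "(\<Sum>c\<in>C. f c * g c) \<le> a * (\<Sum>c\<in>C. f c)" and s: "0 < s" "s < 1"
  shows "(\<Sum>c\<in>C. f c * g c powr s) \<le> a powr s * (\<Sum>c\<in>C. f c)"
proof (cases "a = 0")
  case True
  then have "(\<Sum>c\<in>C. f c * g c) = 0"
    using fg f g by (intro antisym sum_nonneg) auto
  then have "\<forall>c\<in>C. f c * g c = 0"
    using sum_nonneg_eq_0_iff[OF fin, of "\<lambda>c. f c * g c"] f g by simp
  then have "(\<Sum>c\<in>C. f c * g c powr s) = 0" by (intro sum.neutral) auto
  then show ?thesis using True by simp
next
  case False
  then have a_pos: "0 < a" using a by simp
  have young: "f c * g c powr s * a powr (1 - s) \<le> s * (f c * g c) + (1 - s) * a * f c" for c
  proof -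
    have "g c powr s * a powr (1 - s) \<le> s * g c + (1 - s) * a"
    proof (cases "g c = 0")
      case False
      then show ?thesis
        using Youngs_inequality_0[of s "1 - s" "g c" a] g s a_pos by (simp add: less_le)
    qed (use s a_pos in simp)
    then have "f c * (g c powr s * a powr (1 - s)) \<le> f c * (s * g c + (1 - s) * a)"
      using f by (intro mult_left_mono) auto
    then show ?thesis by (simp add: algebra_simps)
  qed
  have "(\<Sum>c\<in>C. f c * g c powr s) * a powr (1 - s)
      \<le> (\<Sum>c\<in>C. s * (f c * g c) + (1 - s) * a * f c)"
    unfolding sum_distrib_right by (intro sum_mono young)
  also have "\<dots> = s * (\<Sum>c\<in>C. f c * g c) + (1 - s) * a * (\<Sum>c\<in>C. f c)"
    by (simp add: sum.distrib sum_distrib_left)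
  also have "\<dots> \<le> s * (a * (\<Sum>c\<in>C. f c)) + (1 - s) * a * (\<Sum>c\<in>C. f c)"
    using fg s by (intro add_right_mono mult_left_mono) auto
  also have "\<dots> = a powr s * (\<Sum>c\<in>C. f c) * a powr (1 - s)"
    using a_pos by (simp add: algebra_simps flip: powr_add)
  finally show ?thesis using a_pos by simp
qed

lemma exists_le_of_sum_le_card_mult:
  fixes f :: "'c \<Rightarrow> real"
  assumes "finite C" "C \<noteq> {}" "(\<Sum>c\<in>C. f c) \<le> real (card C) * B"
  obtains c where "c \<in> C" "f c \<le> B"
proof (rule ccontr)
  assume "\<not> thesis"
  with that have "\<forall>c\<in>C. B < f c" by force
  then have "real (card C) * B < (\<Sum>c\<in>C. f c)"
    using assms(1,2) sum_strict_mono[of C "\<lambda>_. B" f] by simp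
  then show False using assms(3) by simp
qed

lemma finite_codebooks: "finite (codebooks k n :: ('m::finite list \<Rightarrow> 'x::finite list) set)"
  unfolding codebooks_def by (intro finite_PiE finite_lists_length_UNIV)

lemma codebooks_nonempty: "codebooks k n \<noteq> {}"
  by (simp add: codebooks_def PiE_eq_empty_iff) (metis length_replicate)

lemma codebook_length: "c \<in> codebooks k n \<Longrightarrow> length ms = k \<Longrightarrow> length (c ms) = n"
  by (auto simp: codebooks_def)

lemma codebook_upd:
  "c \<in> codebooks k n \<Longrightarrow> length ms = k \<Longrightarrow> length xs = n \<Longrightarrow> c(ms := xs) \<in> codebooks k n"
  using PiE_fun_upd[of xs "\<lambda>_. {xs. length xs = n}" ms c "{ms. length ms = k}"]
  by (simp add: codebooks_def insert_absorb)

text \<open>Under uniformly random codebooks, distinct messages receive independent uniform codewords.\<close>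

lemma sum_codebooks_pair:
  fixes F G :: "'x::{ab_group_add,finite} list \<Rightarrow> real" and ms ms' :: "'m list"
  assumes ms': "length ms' = k" and ne: "ms \<noteq> ms'"
  shows "(\<Sum>c\<in>codebooks k n. F (c ms) * G (c ms')) * real (CARD('x) ^ n)
       = (\<Sum>c\<in>codebooks k n. F (c ms)) * (\<Sum>xs\<in>{xs. length xs = n}. G xs)"
proof -
  let ?X = "{xs :: 'x list. length xs = n}" and ?C = "codebooks k n :: ('m list \<Rightarrow> 'x list) set"
  have shift: "(\<Sum>c\<in>?C. F (c ms) * G (c ms')) = (\<Sum>c\<in>?C. F (c ms) * G (add_list (c ms') d))"
    if d: "d \<in> ?X" for d
  proof (rule sum.reindex_bij_witness[where j="\<lambda>c. c(ms' := sub_list (c ms') d)"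
        and i="\<lambda>c. c(ms' := add_list (c ms') d)"])
    fix c assume "c \<in> ?C"
    then have "length (c ms') = length d" using ms' d codebook_length by auto
    then show "c(ms' := sub_list (c ms') d, ms' := add_list ((c(ms' := sub_list (c ms') d)) ms') d) = c"
      and "c(ms' := sub_list (c ms') d) \<in> ?C"
      and "F ((c(ms' := sub_list (c ms') d)) ms) * G (add_list ((c(ms' := sub_list (c ms') d)) ms') d)
         = F (c ms) * G (c ms')"
      using \<open>c \<in> ?C\<close> ms' ne d by (auto simp: add_list_sub_list intro: codebook_upd)
  next
    fix c assume "c \<in> ?C"
    then have "length (c ms') = length d" using ms' d codebook_length by auto
    then show "c(ms' := add_list (c ms') d, ms' := sub_list ((c(ms' := add_list (c ms') d)) ms') d) = c"
      and "c(ms' := add_list (c ms') d) \<in> ?C"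
      using \<open>c \<in> ?C\<close> ms' d by (auto simp: sub_list_add_list intro: codebook_upd)
  qed
  have "(\<Sum>c\<in>?C. F (c ms) * G (c ms')) * real (CARD('x) ^ n)
      = (\<Sum>d\<in>?X. \<Sum>c\<in>?C. F (c ms) * G (c ms'))"
    by (simp add: card_lists_length_UNIV mult.commute)
  also have "\<dots> = (\<Sum>d\<in>?X. \<Sum>c\<in>?C. F (c ms) * G (add_list (c ms') d))"
    by (rule sum.cong[OF refl shift]) simp
  also have "\<dots> = (\<Sum>c\<in>?C. F (c ms) * (\<Sum>d\<in>?X. G (add_list (c ms') d)))"
    by (simp add: sum.swap[of _ ?X] sum_distrib_left)
  also have "\<dots> = (\<Sum>c\<in>?C. F (c ms) * (\<Sum>xs\<in>?X. G xs))"
    by (intro sum.cong refl arg_cong2[where f="(*)"] sum_lists_add_list codebook_length[OF _ ms'])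
  also have "\<dots> = (\<Sum>c\<in>?C. F (c ms)) * (\<Sum>xs\<in>?X. G xs)"
    by (simp add: sum_distrib_right)
  finally show ?thesis .
qed

lemma sum_codebooks_gallager_le:
  fixes PM :: "'m::finite list \<Rightarrow> real" and Q :: "('x::{ab_group_add,finite} \<times> 'z) list \<Rightarrow> real"
    and ys :: "('x \<times> 'z) list"
  assumes PM: "\<forall>ms. 0 \<le> PM ms" and Q: "\<forall>ys. 0 \<le> Q ys"
    and PM_sum: "(\<Sum>ms\<in>{ms. length ms = k}. PM ms) \<le> 1" and s: "0 < s" "s < 1"
    and ms: "length ms = k"
  defines "q c m \<equiv> PM m * Q (sub_fst ys (c m))"
  shows "(\<Sum>c\<in>codebooks k n. q c ms powr (1 - s) * (\<Sum>m\<in>{m. length m = k} - {ms}. q c m) powr s)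
     \<le> (input_sum Q n ys / real (CARD('x) ^ n)) powr s * (\<Sum>c\<in>codebooks k n. q c ms powr (1 - s))"
proof -
  let ?C = "codebooks k n :: ('m list \<Rightarrow> 'x list) set" and ?M = "{m :: 'm list. length m = k}"
  define f where "f c = q c ms powr (1 - s)" for c
  define a where "a = input_sum Q n ys / real (CARD('x) ^ n)"
  have a: "0 \<le> a" using Q by (simp add: a_def input_sum_nonneg)
  have pair: "(\<Sum>c\<in>?C. f c * q c m) = PM m * ((\<Sum>c\<in>?C. f c) * a)" if m: "m \<in> ?M - {ms}" for m
  proof -
    have "(\<Sum>c\<in>?C. f c * Q (sub_fst ys (c m))) * real (CARD('x) ^ n)
        = (\<Sum>c\<in>?C. f c) * input_sum Q n ys"
      unfolding f_def q_def input_sum_def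
      by (rule sum_codebooks_pair[where F="\<lambda>xs. (PM ms * Q (sub_fst ys xs)) powr (1 - s)"]) (use m in auto)
    then have eq: "(\<Sum>c\<in>?C. f c * Q (sub_fst ys (c m))) = (\<Sum>c\<in>?C. f c) * a"
      by (simp add: a_def eq_divide_eq)
    have "(\<Sum>c\<in>?C. f c * q c m) = PM m * (\<Sum>c\<in>?C. f c * Q (sub_fst ys (c m)))"
      by (simp add: q_def sum_distrib_left mult_ac)
    then show ?thesis using eq by simp
  qed
  have "(\<Sum>c\<in>?C. f c * (\<Sum>m\<in>?M - {ms}. q c m)) = (\<Sum>m\<in>?M - {ms}. \<Sum>c\<in>?C. f c * q c m)"
    by (simp add: sum_distrib_left sum.swap[of _ ?C])
  also have "\<dots> = (\<Sum>m\<in>?M - {ms}. PM m) * ((\<Sum>c\<in>?C. f c) * a)"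
    by (simp add: pair sum_distrib_right)
  also have "\<dots> \<le> 1 * ((\<Sum>c\<in>?C. f c) * a)"
  proof (rule mult_right_mono)
    have "(\<Sum>m\<in>?M - {ms}. PM m) \<le> (\<Sum>m\<in>?M. PM m)"
      using PM by (intro sum_mono2 finite_lists_length_UNIV) auto
    then show "(\<Sum>m\<in>?M - {ms}. PM m) \<le> 1" using PM_sum by simp
    show "0 \<le> (\<Sum>c\<in>?C. f c) * a" using a by (simp add: f_def sum_nonneg)
  qed
  finally have "(\<Sum>c\<in>?C. f c * (\<Sum>m\<in>?M - {ms}. q c m)) \<le> a * (\<Sum>c\<in>?C. f c)"
    by (simp add: mult.commute)
  then show ?thesis
    using sum_mult_powr_le[OF finite_codebooks _ _ a _ s, of f "\<lambda>c. \<Sum>m\<in>?M - {ms}. q c m"]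
      PM Q by (simp add: f_def a_def q_def sum_nonneg)
qed

lemma sum_gallager_shift:
  fixes Q :: "('x::{ab_group_add,finite} \<times> 'z) list \<Rightarrow> real"
  assumes "length xs = n"
  shows "(\<Sum>ys\<in>{ys. length ys = n}. Q (sub_fst ys xs) powr (1 - s) * input_sum Q n ys powr s)
       = (\<Sum>ys\<in>{ys. length ys = n}. Q ys powr (1 - s) * input_sum Q n ys powr s)"
proof -
  have "(\<Sum>ys\<in>{ys. length ys = n}. Q (sub_fst ys xs) powr (1 - s) * input_sum Q n ys powr s)
      = (\<Sum>ys\<in>{ys. length ys = n}. Q (sub_fst ys xs) powr (1 - s) * input_sum Q n (sub_fst ys xs) powr s)"
    using assms by (intro sum.cong) (simp_all add: input_sum_sub_fst)
  also have "\<dots> = (\<Sum>ys\<in>{ys. length ys = n}. Q ys powr (1 - s) * input_sum Q n ys powr s)"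
    by (rule sum_lists_sub_fst[OF assms])
  finally show ?thesis .
qed

text \<open>Random coding: some codebook does at least as well as the average over all codebooks.\<close>

lemma random_coding_bound:
  fixes PM :: "'m::finite list \<Rightarrow> real" and Q :: "('x::{ab_group_add,finite} \<times> 'z) list \<Rightarrow> real"
  assumes PM: "\<forall>ms. 0 \<le> PM ms" and Q: "\<forall>ys. 0 \<le> Q ys"
    and PM_sum: "(\<Sum>ms\<in>{ms. length ms = k}. PM ms) \<le> 1" and s: "0 < s" "s < 1"
  obtains c where "c \<in> codebooks k n"
    "decoding_error PM Q k n c (ml_decoder PM Q k c)
       \<le> real (CARD('x) ^ n) powr (- s) * (\<Sum>ms\<in>{ms. length ms = k}. PM ms powr (1 - s))
         * (\<Sum>ys\<in>{ys. length ys = n}. Q ys powr (1 - s) * input_sum Q n ys powr s)"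
proof -
  let ?C = "codebooks k n :: ('m list \<Rightarrow> 'x list) set"
    and ?M = "{ms :: 'm list. length ms = k}" and ?Y = "{ys :: ('x \<times> 'z) list. length ys = n}"
  define N where "N = real (CARD('x) ^ n)"
  define G where "G = (\<Sum>ys\<in>?Y. Q ys powr (1 - s) * input_sum Q n ys powr s)"
  define q where "q c ys m = PM m * Q (sub_fst ys (c m))" for c ys m
  have N_pos: "0 < N" by (simp add: N_def)
  have scale: "(input_sum Q n ys / N) powr s = N powr (- s) * input_sum Q n ys powr s" for ys
    using N_pos Q by (simp add: powr_divide powr_minus_divide input_sum_nonneg)
  have "(\<Sum>c\<in>?C. decoding_error PM Q k n c (ml_decoder PM Q k c))
      \<le> (\<Sum>c\<in>?C. \<Sum>ms\<in>?M. \<Sum>ys\<in>?Y.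
            q c ys ms powr (1 - s) * (\<Sum>m\<in>?M - {ms}. q c ys m) powr s)"
    unfolding q_def by (intro sum_mono decoding_error_ml_decoder_le) (use PM Q s in auto)
  also have "\<dots> = (\<Sum>ms\<in>?M. \<Sum>c\<in>?C. \<Sum>ys\<in>?Y.
            q c ys ms powr (1 - s) * (\<Sum>m\<in>?M - {ms}. q c ys m) powr s)"
    by (rule sum.swap)
  also have "\<dots> = (\<Sum>ms\<in>?M. \<Sum>ys\<in>?Y. \<Sum>c\<in>?C.
            q c ys ms powr (1 - s) * (\<Sum>m\<in>?M - {ms}. q c ys m) powr s)"
    by (rule sum.cong[OF refl sum.swap])
  also have "\<dots> \<le> (\<Sum>ms\<in>?M. \<Sum>ys\<in>?Y.
            N powr (- s) * input_sum Q n ys powr s * (\<Sum>c\<in>?C. q c ys ms powr (1 - s)))"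
    unfolding q_def N_def[symmetric] scale[symmetric]
    using sum_codebooks_gallager_le[OF PM Q PM_sum s] by (intro sum_mono) (simp add: N_def)
  also have "\<dots> = (\<Sum>ms\<in>?M. PM ms powr (1 - s) * N powr (- s) * (\<Sum>c\<in>?C. \<Sum>ys\<in>?Y.
            Q (sub_fst ys (c ms)) powr (1 - s) * input_sum Q n ys powr s))"
    using PM Q by (simp add: q_def powr_mult sum_distrib_left sum.swap[of _ ?C] mult_ac)
  also have "\<dots> = (\<Sum>ms\<in>?M. PM ms powr (1 - s) * N powr (- s) * (\<Sum>c\<in>?C. G))"
    by (rule sum.cong[OF refl], rule arg_cong2[where f="(*)", OF refl], rule sum.cong[OF refl])
       (simp add: G_def sum_gallager_shift codebook_length)
  also have "\<dots> = real (card ?C) * (N powr (- s) * (\<Sum>ms\<in>?M. PM ms powr (1 - s)) * G)"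
    by (simp add: sum_distrib_left mult_ac)
  finally obtain c where "c \<in> ?C"
    "decoding_error PM Q k n c (ml_decoder PM Q k c) \<le> N powr (- s) * (\<Sum>ms\<in>?M. PM ms powr (1 - s)) * G"
    using exists_le_of_sum_le_card_mult[OF finite_codebooks codebooks_nonempty] by blast
  then show ?thesis using that unfolding N_def G_def by blast
qed

section \<open>Markov sources and channels\<close>

lemma irreducible_As:
  assumes "irreducible_mat Ws" "\<forall>a b. 0 \<le> Ws a b"
  shows "irreducible_mat (As Ws s)"
  using assms(2) by (intro irreducible_mat_cong_support[OF assms]) (auto simp: As_def less_le)

lemma WcZ_nonneg: "\<forall>a b. 0 \<le> Wc a b \<Longrightarrow> 0 \<le> WcZ Wc z z'"
  by (simp add: WcZ_def sum_nonneg)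

lemma Wc_le_WcZ:
  assumes "assumption1 Wc" "\<forall>a b. 0 \<le> Wc a b"
  shows "Wc (x, z) (x', z') \<le> WcZ Wc z z'"
  using member_le_sum[of x UNIV "\<lambda>u. Wc (u, z) (x', z')"] assms(2) sum_fst_eq_WcZ[OF assms(1)]
  by simp

lemma irreducible_Ac:
  assumes a1: "assumption1 Wc" and irr: "irreducible_mat Wc" and nn: "\<forall>a b. 0 \<le> Wc a b"
  shows "irreducible_mat (Ac Wc s)"
proof (rule irreducible_mat_cong_support[OF irr nn])
  show "\<forall>a b. 0 \<le> Ac Wc s a b" by (simp add: Ac_def)
  show "\<forall>a b. 0 < Wc a b \<longleftrightarrow> 0 < Ac Wc s a b"
  proof (intro allI)
    fix a b :: "'a \<times> 'b"
    obtain x z x' z' where ab: "a = (x, z)" "b = (x', z')" by fastforce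
    have "0 \<le> Wc a b" "Wc a b \<le> WcZ Wc z z'" using nn Wc_le_WcZ[OF a1 nn] by (simp_all add: ab)
    then show "0 < Wc a b \<longleftrightarrow> 0 < Ac Wc s a b"
      by (auto simp: Ac_def ab zero_less_mult_iff)
  qed
qed

lemma sum_markov_prob_powr_le:
  fixes Ws :: "'m::finite \<Rightarrow> 'm \<Rightarrow> real"
  assumes nn: "\<forall>a b. 0 \<le> Ws a b" and irr: "irreducible_mat Ws" and P: "\<forall>m. 0 \<le> P m"
  shows "(\<Sum>ms\<in>{ms. length ms = Suc t}. markov_prob P Ws ms powr (1 - s))
       \<le> pf_eigval (As Ws s) ^ t * (\<Sum>m\<in>UNIV. pf_vec (As Ws s) m * P m powr (1 - s))"
proof -
  have nn_As: "\<forall>a b. 0 \<le> As Ws s a b" by (simp add: As_def)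
  note pf = pf_vec[OF nn_As irreducible_As[OF irr nn]]
  show ?thesis
    using sum_markov_prob_le_eigvec[OF nn_As pf(2,1), of "\<lambda>m. P m powr (1 - s)" t]
    by (simp add: markov_prob_powr[OF P nn] As_def)
qed

text \<open>Under Assumption 1 both factors of a Gallager term are Markov path weights, and their
  product is a path weight of \<open>Ac Wc s\<close>.\<close>

lemma gallager_term_markov_prob:
  fixes Wc :: "'x::{ab_group_add,finite} \<times> 'z::finite \<Rightarrow> 'x \<times> 'z \<Rightarrow> real"
  assumes a1: "assumption1 Wc" and nn: "\<forall>a b. 0 \<le> Wc a b" and P: "\<forall>a. 0 \<le> P a"
    and len: "length ys = Suc t"
  shows "markov_prob P Wc ys powr (1 - s) * input_sum (markov_prob P Wc) (Suc t) ys powr s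
       = markov_prob (\<lambda>a. P a powr (1 - s) * PZ1 P (snd a) powr s) (Ac Wc s) ys"
proof -
  have PZ1: "\<forall>z. 0 \<le> PZ1 P z" using P by (simp add: PZ1_def sum_nonneg)
  have WcZ: "\<forall>z z'. 0 \<le> WcZ Wc z z'" using WcZ_nonneg[OF nn] by blast
  show ?thesis
    unfolding input_sum_markov_prob[OF a1 len] markov_prob_powr[OF P nn] markov_prob_powr[OF PZ1 WcZ]
      markov_prob_mult_map Ac_def ..
qed

lemma sum_gallager_terms_le:
  fixes Wc :: "'x::{ab_group_add,finite} \<times> 'z::finite \<Rightarrow> 'x \<times> 'z \<Rightarrow> real"
  assumes a1: "assumption1 Wc" and nn: "\<forall>a b. 0 \<le> Wc a b" and irr: "irreducible_mat Wc"
    and P: "\<forall>a. 0 \<le> P a"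
  shows "(\<Sum>ys\<in>{ys. length ys = Suc t}.
           markov_prob P Wc ys powr (1 - s) * input_sum (markov_prob P Wc) (Suc t) ys powr s)
       \<le> pf_eigval (Ac Wc s) ^ t * (\<Sum>a\<in>UNIV. pf_vec (Ac Wc s) a * (P a powr (1 - s) * PZ1 P (snd a) powr s))"
proof -
  have nn_Ac: "\<forall>a b. 0 \<le> Ac Wc s a b" by (simp add: Ac_def)
  note pf = pf_vec[OF nn_Ac irreducible_Ac[OF a1 irr nn]]
  have "(\<Sum>ys\<in>{ys. length ys = Suc t}.
           markov_prob P Wc ys powr (1 - s) * input_sum (markov_prob P Wc) (Suc t) ys powr s)
      = (\<Sum>ys\<in>{ys. length ys = Suc t}.
           markov_prob (\<lambda>a. P a powr (1 - s) * PZ1 P (snd a) powr s) (Ac Wc s) ys)"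
    by (rule sum.cong[OF refl]) (simp add: gallager_term_markov_prob[OF a1 nn P])
  also have "\<dots> \<le> pf_eigval (Ac Wc s) ^ t *
      (\<Sum>a\<in>UNIV. pf_vec (Ac Wc s) a * (P a powr (1 - s) * PZ1 P (snd a) powr s))"
    by (rule sum_markov_prob_le_eigvec[OF nn_Ac pf(2,1)]) simp
  finally show ?thesis .
qed

lemma code_error_eq_decoding_error:
  "code_error PM1 Ws PXZ1 Wc k n e d
     = decoding_error (markov_prob PM1 Ws) (markov_prob PXZ1 Wc) k n e d"
  unfolding code_error_def decoding_error_def sub_fst_def ..

lemma Pj_nonneg_le_code_error:
  fixes PM1 :: "'m::finite \<Rightarrow> real" and PXZ1 :: "('x::{ab_group_add,finite} \<times> 'z::finite) \<Rightarrow> real"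
  assumes "\<forall>a. 0 \<le> PM1 a" "\<forall>a b. 0 \<le> Ws a b" "\<forall>a. 0 \<le> PXZ1 a" "\<forall>a b. 0 \<le> Wc a b"
    and e: "\<forall>ms. length ms = k \<longrightarrow> length (e ms) = n"
  shows "0 \<le> Pj PM1 Ws PXZ1 Wc k n" "Pj PM1 Ws PXZ1 Wc k n \<le> code_error PM1 Ws PXZ1 Wc k n e d"
proof -
  let ?E = "{code_error PM1 Ws PXZ1 Wc k n e d | e d. \<forall>ms. length ms = k \<longrightarrow> length (e ms) = n}"
  have nonneg: "0 \<le> code_error PM1 Ws PXZ1 Wc k n e' d'" for e' d'
    unfolding code_error_def using assms(1-4)
    by (intro sum_nonneg mult_nonneg_nonneg) (simp_all add: markov_prob_nonneg)
  have mem: "code_error PM1 Ws PXZ1 Wc k n e d \<in> ?E" using e by blast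
  have "bdd_below ?E" using nonneg by (auto intro: bdd_belowI[of _ 0])
  then show "Pj PM1 Ws PXZ1 Wc k n \<le> code_error PM1 Ws PXZ1 Wc k n e d"
    unfolding Pj_def using mem by (rule cInf_lower[rotated])
  show "0 \<le> Pj PM1 Ws PXZ1 Wc k n"
    unfolding Pj_def using mem nonneg by (intro cInf_greatest) auto
qed

lemma Pj_le_pf_bound:
  fixes PM1 :: "'m::finite \<Rightarrow> real" and Ws :: "'m \<Rightarrow> 'm \<Rightarrow> real"
    and PXZ1 :: "('x::{ab_group_add,finite} \<times> 'z::finite) \<Rightarrow> real"
    and Wc :: "'x \<times> 'z \<Rightarrow> 'x \<times> 'z \<Rightarrow> real"
  assumes Ws: "transition_matrix Ws" "irreducible_mat Ws" and PM1: "prob_dist PM1"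
    and Wc: "transition_matrix Wc" "irreducible_mat Wc" and PXZ1: "prob_dist PXZ1"
    and a1: "assumption1 Wc" and s: "0 < s" "s < 1"
  shows "Pj PM1 Ws PXZ1 Wc (Suc k) (Suc n)
    \<le> real (CARD('x) ^ Suc n) powr (- s)
      * (pf_eigval (As Ws s) ^ k * (\<Sum>m\<in>UNIV. pf_vec (As Ws s) m * PM1 m powr (1 - s)))
      * (pf_eigval (Ac Wc s) ^ n
          * (\<Sum>a\<in>UNIV. pf_vec (Ac Wc s) a * (PXZ1 a powr (1 - s) * PZ1 PXZ1 (snd a) powr s)))"
proof -
  have nn: "\<forall>a. 0 \<le> PM1 a" "\<forall>a b. 0 \<le> Ws a b" "\<forall>a. 0 \<le> PXZ1 a" "\<forall>a b. 0 \<le> Wc a b"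
    using Ws Wc PM1 PXZ1 by (simp_all add: transition_matrix_def prob_dist_def)
  let ?PM = "markov_prob PM1 Ws" and ?Q = "markov_prob PXZ1 Wc"
  have PM: "\<forall>ms. 0 \<le> ?PM ms" and Q: "\<forall>ys. 0 \<le> ?Q ys"
    using nn by (simp_all add: markov_prob_nonneg)
  have PM_sum: "(\<Sum>ms\<in>{ms. length ms = Suc k}. ?PM ms) \<le> 1"
    using sum_markov_prob_eq_1[OF Ws(1) PM1] by simp
  obtain c where c: "c \<in> codebooks (Suc k) (Suc n)"
    "decoding_error ?PM ?Q (Suc k) (Suc n) c (ml_decoder ?PM ?Q (Suc k) c)
       \<le> real (CARD('x) ^ Suc n) powr (- s) * (\<Sum>ms\<in>{ms. length ms = Suc k}. ?PM ms powr (1 - s))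
         * (\<Sum>ys\<in>{ys. length ys = Suc n}. ?Q ys powr (1 - s) * input_sum ?Q (Suc n) ys powr s)"
    by (rule random_coding_bound[OF PM Q PM_sum s])
  have "Pj PM1 Ws PXZ1 Wc (Suc k) (Suc n)
      \<le> decoding_error ?PM ?Q (Suc k) (Suc n) c (ml_decoder ?PM ?Q (Suc k) c)"
    using Pj_nonneg_le_code_error(2)[OF nn] codebook_length[OF c(1)]
    by (simp add: code_error_eq_decoding_error)
  also note c(2)
  also have "real (CARD('x) ^ Suc n) powr (- s) * (\<Sum>ms\<in>{ms. length ms = Suc k}. ?PM ms powr (1 - s))
         * (\<Sum>ys\<in>{ys. length ys = Suc n}. ?Q ys powr (1 - s) * input_sum ?Q (Suc n) ys powr s)
      \<le> real (CARD('x) ^ Suc n) powr (- s)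
      * (pf_eigval (As Ws s) ^ k * (\<Sum>m\<in>UNIV. pf_vec (As Ws s) m * PM1 m powr (1 - s)))
      * (pf_eigval (Ac Wc s) ^ n
          * (\<Sum>a\<in>UNIV. pf_vec (Ac Wc s) a * (PXZ1 a powr (1 - s) * PZ1 PXZ1 (snd a) powr s)))"
    using sum_markov_prob_powr_le[OF nn(2) Ws(2) nn(1)] sum_gallager_terms_le[OF a1 nn(4) Wc(2) nn(3)]
    by (intro mult_mono' mult_left_mono) (auto intro!: sum_nonneg mult_nonneg_nonneg)
  finally show ?thesis .
qed

lemma prob_dist_pos:
  assumes "prob_dist P"
  obtains a where "0 < P a"
proof -
  have "(\<Sum>a\<in>UNIV. P a) \<noteq> 0" using assms by (simp add: prob_dist_def)
  then obtain a where "P a \<noteq> 0" by (meson sum.neutral)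
  then show ?thesis using that assms by (simp add: prob_dist_def less_le)
qed

lemma delta_s_exp:
  assumes "transition_matrix Ws" "irreducible_mat Ws" "prob_dist PM1"
  shows "exp (delta_s PM1 Ws s) = (\<Sum>m\<in>UNIV. pf_vec (As Ws s) m * PM1 m powr (1 - s))"
proof -
  obtain m where "0 < PM1 m" using prob_dist_pos[OF assms(3)] .
  moreover have "\<forall>a b. 0 \<le> As Ws s a b" by (simp add: As_def)
  moreover have "irreducible_mat (As Ws s)"
    using assms by (intro irreducible_As) (simp_all add: transition_matrix_def)
  ultimately have "0 < (\<Sum>m\<in>UNIV. pf_vec (As Ws s) m * PM1 m powr (1 - s))"
    by (intro pf_weighted_sum_pos[where b=m]) auto
  then show ?thesis by (simp add: delta_s_def)
qed

lemma delta_c_exp: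
  assumes "assumption1 Wc" "transition_matrix Wc" "irreducible_mat Wc" "prob_dist PXZ1"
  shows "exp (delta_c PXZ1 Wc s)
    = (\<Sum>a\<in>UNIV. pf_vec (Ac Wc s) a * (PXZ1 a powr (1 - s) * PZ1 PXZ1 (snd a) powr s))"
proof -
  obtain a where a: "0 < PXZ1 a" using prob_dist_pos[OF assms(4)] .
  define w where "w a = PXZ1 a powr (1 - s) * PZ1 PXZ1 (snd a) powr s" for a
  have "PXZ1 a \<le> PZ1 PXZ1 (snd a)"
    using member_le_sum[of "fst a" UNIV "\<lambda>x. PXZ1 (x, snd a)"] assms(4)
    by (simp add: PZ1_def prob_dist_def)
  then have "0 < w a" using a by (simp add: w_def)
  moreover have "\<forall>a b. 0 \<le> Ac Wc s a b" by (simp add: Ac_def)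
  moreover have "irreducible_mat (Ac Wc s)"
    using assms by (intro irreducible_Ac) (simp_all add: transition_matrix_def)
  ultimately have "0 < (\<Sum>a\<in>UNIV. pf_vec (Ac Wc s) a * w a)"
    by (intro pf_weighted_sum_pos[where b=a]) (auto simp: w_def)
  then show ?thesis by (simp add: delta_c_def w_def)
qed

lemma elog_le_ereal:
  assumes "0 \<le> x" "x \<le> exp y"
  shows "elog x \<le> ereal y"
proof (cases "x = 0")
  case False
  then have "ln x \<le> ln (exp y)" using assms by (intro ln_mono) auto
  then show ?thesis using False by (simp add: elog_def)
qed (simp add: elog_def)

lemma Pj_le_exp_exponent:
  fixes PM1 :: "'m::finite \<Rightarrow> real" and Ws :: "'m \<Rightarrow> 'm \<Rightarrow> real"
    and PXZ1 :: "('x::{ab_group_add,finite} \<times> 'z::finite) \<Rightarrow> real"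
    and Wc :: "'x \<times> 'z \<Rightarrow> 'x \<times> 'z \<Rightarrow> real"
  assumes Ws: "transition_matrix Ws" "irreducible_mat Ws" and PM1: "prob_dist PM1"
    and Wc: "transition_matrix Wc" "irreducible_mat Wc" and PXZ1: "prob_dist PXZ1"
    and a1: "assumption1 Wc" and kn: "1 \<le> k" "2 \<le> n" and s: "0 < s" "s < 1"
  shows "Pj PM1 Ws PXZ1 Wc k n \<le> exp (- real n * s * ln (real CARD('x))
      + (real n - 1) * U_fn Ws Wc ((real k - 1) / (real n - 1)) s
      + delta_s PM1 Ws s + delta_c PXZ1 Wc s)"
proof -
  define k' n' where "k' = k - 1" and "n' = n - 1"
  have k': "k = Suc k'" "real k - 1 = real k'" and n': "n = Suc n'" "real n - 1 = real n'" "n' \<noteq> 0"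
    using kn by (simp_all add: k'_def n'_def of_nat_diff)
  let ?ls = "pf_eigval (As Ws s)" and ?lc = "pf_eigval (Ac Wc s)"
  have lambdas: "0 < ?ls" "0 < ?lc"
    using Ws Wc a1 by (auto simp: transition_matrix_def As_def Ac_def
        intro!: pf_eigval_pos irreducible_As irreducible_Ac)
  have N_pos: "0 < real (CARD('x) ^ n) powr (- s)" by simp
  have "- real n * s * ln (real CARD('x)) + (real n - 1) * U_fn Ws Wc ((real k - 1) / (real n - 1)) s
      = ln (real (CARD('x) ^ n) powr (- s)) + ln (?ls ^ k') + ln (?lc ^ n')"
    using n'(3) lambdas
    by (simp add: U_fn_def thetaH_s_def thetaH_c_def ln_powr ln_realpow k'(2) n'(2) field_simps)
  then have "exp (- real n * s * ln (real CARD('x))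
      + (real n - 1) * U_fn Ws Wc ((real k - 1) / (real n - 1)) s
      + delta_s PM1 Ws s + delta_c PXZ1 Wc s)
    = real (CARD('x) ^ n) powr (- s) * ?ls ^ k' * ?lc ^ n'
      * exp (delta_s PM1 Ws s) * exp (delta_c PXZ1 Wc s)"
    using lambdas by (simp only: exp_add exp_ln[OF N_pos] exp_ln[OF zero_less_power])
  then show ?thesis
    using Pj_le_pf_bound[OF Ws PM1 Wc PXZ1 a1 s, of k' n']
    by (simp add: k'(1) n'(1) delta_s_exp[OF Ws PM1] delta_c_exp[OF a1 Wc PXZ1] mult_ac)
qed

theorem mainTheorem9:
  fixes PM1 :: "'m::finite \<Rightarrow> real" and Ws :: "'m \<Rightarrow> 'm \<Rightarrow> real"
    and PXZ1 :: "('x::{ab_group_add,finite} \<times> 'z::finite) \<Rightarrow> real"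
    and Wc :: "'x \<times> 'z \<Rightarrow> 'x \<times> 'z \<Rightarrow> real"
    and k n :: nat
  assumes "transition_matrix Ws" "irreducible_mat Ws" "aperiodic_mat Ws" "prob_dist PM1"
    and "transition_matrix Wc" "irreducible_mat Wc" "aperiodic_mat Wc" "prob_dist PXZ1"
    and "assumption1 Wc"
    and "k \<ge> 2" "n \<ge> 2"
  shows "elog (Pj PM1 Ws PXZ1 Wc k n) \<le>
    (INF s\<in>{0<..<1::real}. ereal (- real n * s * ln (real CARD('x))
        + (real n - 1) * U_fn Ws Wc ((real k - 1) / (real n - 1)) s
        + delta_s PM1 Ws s + delta_c PXZ1 Wc s))"
proof (rule INF_greatest)
  fix s :: real assume "s \<in> {0<..<1}"
  then have "Pj PM1 Ws PXZ1 Wc k n \<le> exp (- real n * s * ln (real CARD('x))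
      + (real n - 1) * U_fn Ws Wc ((real k - 1) / (real n - 1)) s
      + delta_s PM1 Ws s + delta_c PXZ1 Wc s)"
    using assms by (intro Pj_le_exp_exponent) auto
  moreover have "0 \<le> Pj PM1 Ws PXZ1 Wc k n"
    using assms(1,4,5,8) by (intro Pj_nonneg_le_code_error(1)[where e="\<lambda>_. replicate n 0"])
      (simp_all add: transition_matrix_def prob_dist_def)
  ultimately show "elog (Pj PM1 Ws PXZ1 Wc k n) \<le> ereal (- real n * s * ln (real CARD('x))
      + (real n - 1) * U_fn Ws Wc ((real k - 1) / (real n - 1)) s
      + delta_s PM1 Ws s + delta_c PXZ1 Wc s)"
    by (rule elog_le_ereal[rotated])
qed

end
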